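(* A monoid $S$ is weakly right coherent if and only if $S^0$ is weakly right coherent.
   Context: For a semigroup $S$, $S^0$ denotes $S$ if $S$ has a zero, and otherwise $S$ with a zero adjoined. A semigroup $T$ is weakly right coherent if $T^1$ is weakly right coherent, where $T^1$ is $T$ if $T$ is a monoid and otherwise $T$ with an identity adjoined; a monoid $M$ is weakly right coherent if every finitely generated right ideal of $M$ is finitely presented as a right $M$-act (equivalently, known: $M$ is right ideal Howson and finitely right equated). *)

theory Defs
  imports "HOL-Algebra.Group"
begin

definition right_ideal :: "'a monoid \<Rightarrow> 'a set \<Rightarrow> bool" where
  "right_ideal M I \<longleftrightarrow> I \<subseteq> carrier M \<and>
     (\<forall>a\<in>I. \<forall>s\<in>carrier M. a \<otimes>\<^bsub>M\<^esub> s \<in> I)"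

definition fg_right_ideal :: "'a monoid \<Rightarrow> 'a set \<Rightarrow> bool" where
  "fg_right_ideal M I \<longleftrightarrow> right_ideal M I \<and>
     (\<exists>X. finite X \<and> X \<subseteq> carrier M \<and>
          I = {x \<otimes>\<^bsub>M\<^esub> s | x s. x \<in> X \<and> s \<in> carrier M})"

text \<open>The free right M-act on the finite set of generators {0..<n}:
  pairs (i, s) with i < n and s in M, acted on by (i,s)t = (i, st).\<close>

definition free_act :: "'a monoid \<Rightarrow> nat \<Rightarrow> (nat \<times> 'a) set" where
  "free_act M n = {..<n} \<times> carrier M"

definition right_congruence :: "'a monoid \<Rightarrow> nat \<Rightarrow> ((nat \<times> 'a) \<times> (nat \<times> 'a)) set \<Rightarrow> bool" where
  "right_congruence M n \<rho> \<longleftrightarrow> equiv (free_act M n) \<rho> \<and>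
     (\<forall>i s j t u. ((i, s), (j, t)) \<in> \<rho> \<longrightarrow> u \<in> carrier M \<longrightarrow>
        ((i, s \<otimes>\<^bsub>M\<^esub> u), (j, t \<otimes>\<^bsub>M\<^esub> u)) \<in> \<rho>)"

definition generated_right_congruence ::
  "'a monoid \<Rightarrow> nat \<Rightarrow> ((nat \<times> 'a) \<times> (nat \<times> 'a)) set \<Rightarrow> ((nat \<times> 'a) \<times> (nat \<times> 'a)) set" where
  "generated_right_congruence M n H = \<Inter>{\<rho>. right_congruence M n \<rho> \<and> H \<subseteq> \<rho>}"

definition fg_right_congruence :: "'a monoid \<Rightarrow> nat \<Rightarrow> ((nat \<times> 'a) \<times> (nat \<times> 'a)) set \<Rightarrow> bool" where
  "fg_right_congruence M n \<rho> \<longleftrightarrow>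
     (\<exists>H. finite H \<and> H \<subseteq> free_act M n \<times> free_act M n \<and> \<rho> = generated_right_congruence M n H)"

text \<open>A right ideal I (viewed as a right M-act) is finitely presented if there is
  a surjective act morphism F_n \<rightarrow> I, (i,s) \<mapsto> f i \<otimes> s, from a finitely generated
  free act, whose kernel is a finitely generated right congruence (i.e. I \<cong> F_n/\<rho>
  with \<rho> finitely generated).\<close>

definition act_kernel :: "'a monoid \<Rightarrow> nat \<Rightarrow> (nat \<Rightarrow> 'a) \<Rightarrow> ((nat \<times> 'a) \<times> (nat \<times> 'a)) set" where
  "act_kernel M n f = {((i, s), (j, t)). (i, s) \<in> free_act M n \<and> (j, t) \<in> free_act M n \<and>
       f i \<otimes>\<^bsub>M\<^esub> s = f j \<otimes>\<^bsub>M\<^esub> t}"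

definition fp_right_ideal :: "'a monoid \<Rightarrow> 'a set \<Rightarrow> bool" where
  "fp_right_ideal M I \<longleftrightarrow>
     (\<exists>n f. (\<forall>i<n. f i \<in> I) \<and>
            I = {f i \<otimes>\<^bsub>M\<^esub> s | i s. i < n \<and> s \<in> carrier M} \<and>
            fg_right_congruence M n (act_kernel M n f))"

definition weakly_right_coherent :: "'a monoid \<Rightarrow> bool" where
  "weakly_right_coherent M \<longleftrightarrow> (\<forall>I. fg_right_ideal M I \<longrightarrow> fp_right_ideal M I)"

definition has_zero :: "'a monoid \<Rightarrow> bool" where
  "has_zero S \<longleftrightarrow> (\<exists>z\<in>carrier S. \<forall>x\<in>carrier S. z \<otimes>\<^bsub>S\<^esub> x = z \<and> x \<otimes>\<^bsub>S\<^esub> z = z)"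

text \<open>S^0, realised on the type 'a option: an isomorphic copy of S (via Some) if S
  already has a zero, otherwise that copy with a new zero None adjoined.\<close>

definition zero_adjoin :: "'a monoid \<Rightarrow> 'a option monoid" where
  "zero_adjoin S = \<lparr> carrier = (if has_zero S then Some ` carrier S
                                 else insert None (Some ` carrier S)),
      mult = (\<lambda>x y. case (x, y) of (Some a, Some b) \<Rightarrow> Some (a \<otimes>\<^bsub>S\<^esub> b) | _ \<Rightarrow> None),
      one = Some \<one>\<^bsub>S\<^esub> \<rparr>"

end

theory Submission
  imports Defs
begin

text \<open>
  $S^0$ is either a copy of $S$ or $S$ with a new zero adjoined; in both cases a finitely generated
  right ideal of $S^0$ is, apart from the zero, the image of a finitely generated right ideal of $S$,
  and conversely. A presentation of $I$ over $S$ by generators $f_i$ and relations $H$ yields one of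
  $I \cup \{0\}$ over $S^0$: the kernel of $(i, s) \mapsto f_i s$ on $F_n^0$ is generated by $H$
  together with the relations $(i, 0) \sim (0, 0)$.

  Conversely, take a presentation over $S^0$ with generators $g_i$, and replace each generator
  $g_i = 0$ by a nonzero one $g_{r(i)}$. If $\sigma$ is a right congruence on $F_n$ containing the
  relations between nonzero elements and the relations $(i, 1) \sim (r(i), 1)$, then $\sigma$,
  together with one extra class consisting of all elements of $F_n^0$ sent to $0$, is a right
  congruence on $F_n^0$ containing the given finitely many relations over $S^0$, hence the
  kernel over $S^0$; it follows that $\sigma$ contains the kernel over $S$.
\<close>

section \<open>Right congruences on free acts and presentations\<close>

lemma right_congruence_refl:
  "right_congruence M n \<rho> \<Longrightarrow> x \<in> free_act M n \<Longrightarrow> (x, x) \<in> \<rho>"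
  by (auto simp: right_congruence_def equiv_def refl_on_def)

lemma right_congruence_sym:
  "right_congruence M n \<rho> \<Longrightarrow> (x, y) \<in> \<rho> \<Longrightarrow> (y, x) \<in> \<rho>"
  unfolding right_congruence_def equiv_def sym_def by blast

lemma right_congruence_trans:
  "right_congruence M n \<rho> \<Longrightarrow> (x, y) \<in> \<rho> \<Longrightarrow> (y, z) \<in> \<rho> \<Longrightarrow> (x, z) \<in> \<rho>"
  unfolding right_congruence_def equiv_def trans_def by blast

lemma right_congruence_field:
  "right_congruence M n \<rho> \<Longrightarrow> (x, y) \<in> \<rho> \<Longrightarrow> x \<in> free_act M n \<and> y \<in> free_act M n"
  by (auto simp: right_congruence_def equiv_def)

lemma right_congruence_mult:
  "right_congruence M n \<rho> \<Longrightarrow> ((i, s), (j, t)) \<in> \<rho> \<Longrightarrow> u \<in> carrier M \<Longrightarrow>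
     ((i, s \<otimes>\<^bsub>M\<^esub> u), (j, t \<otimes>\<^bsub>M\<^esub> u)) \<in> \<rho>"
  by (auto simp: right_congruence_def)

lemma generated_right_congruence_least:
  "right_congruence M n \<rho> \<Longrightarrow> H \<subseteq> \<rho> \<Longrightarrow> generated_right_congruence M n H \<subseteq> \<rho>"
  unfolding generated_right_congruence_def by blast

lemma generated_right_congruence_superset: "H \<subseteq> generated_right_congruence M n H"
  unfolding generated_right_congruence_def by blast

lemma generated_right_congruence_unique:
  assumes "right_congruence M n K" "H \<subseteq> K"
    and "\<And>\<rho>. right_congruence M n \<rho> \<Longrightarrow> H \<subseteq> \<rho> \<Longrightarrow> K \<subseteq> \<rho>"
  shows "K = generated_right_congruence M n H"
  unfolding generated_right_congruence_def using assms by blast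

lemma right_congruence_act_kernel:
  assumes M: "monoid M" and f: "\<And>i. i < n \<Longrightarrow> f i \<in> carrier M"
  shows "right_congruence M n (act_kernel M n f)"
  unfolding right_congruence_def equiv_def refl_on_def sym_def trans_def
  using monoid.m_assoc[OF M, symmetric] monoid.m_closed[OF M] f
  by (auto simp: act_kernel_def free_act_def)

abbreviation right_ideal_span :: "'a monoid \<Rightarrow> 'a set \<Rightarrow> 'a set" where
  "right_ideal_span M X \<equiv> {x \<otimes>\<^bsub>M\<^esub> s | x s. x \<in> X \<and> s \<in> carrier M}"

lemma right_ideal_span_memI: "x \<in> X \<Longrightarrow> s \<in> carrier M \<Longrightarrow> x \<otimes>\<^bsub>M\<^esub> s \<in> right_ideal_span M X"
  by blast

lemma right_ideal_span_image:
  "{f i \<otimes>\<^bsub>M\<^esub> s | i s. i < n \<and> s \<in> carrier M} = right_ideal_span M (f ` {..<n})"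
  by auto

lemma fg_right_ideal_subset_carrier: "fg_right_ideal M I \<Longrightarrow> I \<subseteq> carrier M"
  by (simp add: fg_right_ideal_def right_ideal_def)

lemma fg_right_ideal_span:
  assumes M: "monoid M" and X: "finite X" "X \<subseteq> carrier M"
  shows "fg_right_ideal M (right_ideal_span M X)"
proof -
  have "a \<otimes>\<^bsub>M\<^esub> s \<in> right_ideal_span M X"
    if "x \<in> X" "t \<in> carrier M" "s \<in> carrier M" "a = x \<otimes>\<^bsub>M\<^esub> t" for a s x t
    using that X(2) monoid.m_assoc[OF M, of x t s] monoid.m_closed[OF M, of t s] by blast
  then show ?thesis
    unfolding fg_right_ideal_def right_ideal_def
    using X monoid.m_closed[OF M] by blast
qed

lemma fp_right_ideal_empty: "fp_right_ideal M {}"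
proof -
  have kernel: "act_kernel M 0 f = {}" for f
    by (auto simp: act_kernel_def free_act_def)
  have "right_congruence M 0 {}"
    by (simp add: right_congruence_def free_act_def equiv_def refl_on_def sym_def trans_def)
  then have "generated_right_congruence M 0 {} = {}"
    using generated_right_congruence_least by blast
  then have "fg_right_congruence M 0 (act_kernel M 0 f)" for f
    unfolding fg_right_congruence_def kernel by auto
  then show ?thesis
    unfolding fp_right_ideal_def by auto
qed

lemma fp_right_ideal_left_zero:
  assumes M: "monoid M" and z: "z \<in> carrier M" "\<And>s. s \<in> carrier M \<Longrightarrow> z \<otimes>\<^bsub>M\<^esub> s = z"
  shows "fp_right_ideal M {z}"
proof -
  let ?f = "\<lambda>_::nat. z"
  let ?H = "{((0::nat, \<one>\<^bsub>M\<^esub>), (0::nat, z))}"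
  have one: "\<one>\<^bsub>M\<^esub> \<in> carrier M"
    using monoid.one_closed[OF M] .
  have "act_kernel M 1 ?f = generated_right_congruence M 1 ?H"
  proof (rule generated_right_congruence_unique)
    show "right_congruence M 1 (act_kernel M 1 ?f)"
      using right_congruence_act_kernel[OF M] z by auto
    show "?H \<subseteq> act_kernel M 1 ?f"
      using one z by (auto simp: act_kernel_def free_act_def)
  next
    fix \<rho> assume \<rho>: "right_congruence M 1 \<rho>" "?H \<subseteq> \<rho>"
    have to_z: "((0, s), (0, z)) \<in> \<rho>" if "s \<in> carrier M" for s
      using right_congruence_mult[OF \<rho>(1), of 0 "\<one>\<^bsub>M\<^esub>" 0 z s] \<rho>(2) that
        monoid.l_one[OF M, of s] z
      by auto
    show "act_kernel M 1 ?f \<subseteq> \<rho>"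
    proof
      fix p assume "p \<in> act_kernel M 1 ?f"
      then obtain s t where "p = ((0, s), (0, t))" "s \<in> carrier M" "t \<in> carrier M"
        by (auto simp: act_kernel_def free_act_def)
      then show "p \<in> \<rho>"
        using to_z right_congruence_sym[OF \<rho>(1)] right_congruence_trans[OF \<rho>(1)] by blast
    qed
  qed
  then have "fg_right_congruence M 1 (act_kernel M 1 ?f)"
    unfolding fg_right_congruence_def using one z by (auto simp: free_act_def)
  moreover have "{z} = {?f i \<otimes>\<^bsub>M\<^esub> s | i s. i < 1 \<and> s \<in> carrier M}"
    using one by (auto simp: z(2) intro!: exI[of _ "\<one>\<^bsub>M\<^esub>"])
  ultimately show ?thesis
    unfolding fp_right_ideal_def by (intro exI[of _ 1] exI[of _ ?f]) auto
qed

section \<open>The monoid $S^0$\<close>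

lemma mult_zero_adjoin_Some [simp]:
  "Some a \<otimes>\<^bsub>zero_adjoin S\<^esub> Some b = Some (a \<otimes>\<^bsub>S\<^esub> b)"
  by (simp add: zero_adjoin_def)

lemma None_mult_zero_adjoin [simp]: "None \<otimes>\<^bsub>zero_adjoin S\<^esub> x = None"
  by (simp add: zero_adjoin_def)

lemma mult_None_zero_adjoin [simp]: "x \<otimes>\<^bsub>zero_adjoin S\<^esub> None = None"
  by (cases x) (simp_all add: zero_adjoin_def)

lemma mult_zero_adjoin_eq_None: "x \<otimes>\<^bsub>zero_adjoin S\<^esub> y = None \<longleftrightarrow> x = None \<or> y = None"
  by (cases x; cases y) auto

lemma one_zero_adjoin [simp]: "\<one>\<^bsub>zero_adjoin S\<^esub> = Some \<one>\<^bsub>S\<^esub>"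
  by (simp add: zero_adjoin_def)

lemma Some_in_carrier_zero_adjoin [simp]:
  "Some a \<in> carrier (zero_adjoin S) \<longleftrightarrow> a \<in> carrier S"
  by (auto simp: zero_adjoin_def)

lemma carrier_zero_adjoin_cases:
  "x \<in> carrier (zero_adjoin S) \<Longrightarrow> x = None \<or> (\<exists>a\<in>carrier S. x = Some a)"
  by (auto simp: zero_adjoin_def split: if_splits)

lemma monoid_zero_adjoin:
  assumes S: "monoid S"
  shows "monoid (zero_adjoin S)"
proof (rule monoidI)
  fix x y z
  assume "x \<in> carrier (zero_adjoin S)" "y \<in> carrier (zero_adjoin S)" "z \<in> carrier (zero_adjoin S)"
  then show "x \<otimes>\<^bsub>zero_adjoin S\<^esub> y \<otimes>\<^bsub>zero_adjoin S\<^esub> z =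
         x \<otimes>\<^bsub>zero_adjoin S\<^esub> (y \<otimes>\<^bsub>zero_adjoin S\<^esub> z)"
    using carrier_zero_adjoin_cases[of x S] carrier_zero_adjoin_cases[of y S]
      carrier_zero_adjoin_cases[of z S] monoid.m_assoc[OF S]
    by auto
next
  fix x y
  assume "x \<in> carrier (zero_adjoin S)" "y \<in> carrier (zero_adjoin S)"
  then show "x \<otimes>\<^bsub>zero_adjoin S\<^esub> y \<in> carrier (zero_adjoin S)"
    using carrier_zero_adjoin_cases[of x S] carrier_zero_adjoin_cases[of y S] monoid.m_closed[OF S]
    by auto
next
  fix x
  assume "x \<in> carrier (zero_adjoin S)"
  then show "\<one>\<^bsub>zero_adjoin S\<^esub> \<otimes>\<^bsub>zero_adjoin S\<^esub> x = x"
    and "x \<otimes>\<^bsub>zero_adjoin S\<^esub> \<one>\<^bsub>zero_adjoin S\<^esub> = x"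
    using carrier_zero_adjoin_cases[of x S] monoid.l_one[OF S] monoid.r_one[OF S] by auto
qed (use monoid.one_closed[OF S] in simp)

lemma right_ideal_span_zero_adjoin:
  assumes X': "X' \<subseteq> carrier (zero_adjoin S)" and x0: "Some x0 \<in> X'"
  shows "right_ideal_span (zero_adjoin S) X' =
    Some ` right_ideal_span S {x. Some x \<in> X'} \<union> ({None} \<inter> carrier (zero_adjoin S))"
    (is "?L = ?R")
proof
  show "?L \<subseteq> ?R"
  proof
    fix y assume "y \<in> ?L"
    then obtain x' s where y: "y = x' \<otimes>\<^bsub>zero_adjoin S\<^esub> s" "x' \<in> X'" "s \<in> carrier (zero_adjoin S)"
      by auto
    show "y \<in> ?R"
    proof (cases "x' = None \<or> s = None")
      case True
      then have "y = None" "None \<in> carrier (zero_adjoin S)"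
        using y X' by auto
      then show ?thesis
        by blast
    next
      case False
      then obtain x t where "x' = Some x" "s = Some t"
        by auto
      then have "y = Some (x \<otimes>\<^bsub>S\<^esub> t)" "x \<in> {x. Some x \<in> X'}" "t \<in> carrier S"
        using y by auto
      then show ?thesis
        by blast
    qed
  qed
next
  have "None \<in> ?L" if "None \<in> carrier (zero_adjoin S)"
    using x0 that mult_None_zero_adjoin[of S "Some x0", symmetric] by blast
  moreover have "Some (x \<otimes>\<^bsub>S\<^esub> t) \<in> ?L" if "Some x \<in> X'" "t \<in> carrier S" for x t
  proof -
    have "Some (x \<otimes>\<^bsub>S\<^esub> t) = Some x \<otimes>\<^bsub>zero_adjoin S\<^esub> Some t" "Some t \<in> carrier (zero_adjoin S)"
      using that(2) by simp_all
    then show ?thesis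
      using that(1) by blast
  qed
  ultimately show "?R \<subseteq> ?L"
    by blast
qed

section \<open>From $S$ to $S^0$\<close>

lemma right_congruence_vimage_Some:
  assumes \<rho>: "right_congruence (zero_adjoin S) n \<rho>"
  shows "right_congruence S n (map_prod (apsnd Some) (apsnd Some) -` \<rho>)"
  unfolding right_congruence_def equiv_def refl_on_def sym_def trans_def
proof (intro conjI allI impI ballI subsetI)
  fix p assume "p \<in> map_prod (apsnd Some) (apsnd Some) -` \<rho>"
  then show "p \<in> free_act S n \<times> free_act S n"
    using right_congruence_field[OF \<rho>] by (cases p) (force simp: free_act_def)
next
  fix x assume "x \<in> free_act S n"
  then show "(x, x) \<in> map_prod (apsnd Some) (apsnd Some) -` \<rho>"
    using right_congruence_refl[OF \<rho>] by (cases x) (auto simp: free_act_def)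
next
  fix x y assume "(x, y) \<in> map_prod (apsnd Some) (apsnd Some) -` \<rho>"
  then show "(y, x) \<in> map_prod (apsnd Some) (apsnd Some) -` \<rho>"
    using right_congruence_sym[OF \<rho>] by simp
next
  fix x y z
  assume "(x, y) \<in> map_prod (apsnd Some) (apsnd Some) -` \<rho>"
    and "(y, z) \<in> map_prod (apsnd Some) (apsnd Some) -` \<rho>"
  then show "(x, z) \<in> map_prod (apsnd Some) (apsnd Some) -` \<rho>"
    using right_congruence_trans[OF \<rho>] by simp
next
  fix i s j t u
  assume "((i, s), (j, t)) \<in> map_prod (apsnd Some) (apsnd Some) -` \<rho>" "u \<in> carrier S"
  then show "((i, s \<otimes>\<^bsub>S\<^esub> u), (j, t \<otimes>\<^bsub>S\<^esub> u)) \<in> map_prod (apsnd Some) (apsnd Some) -` \<rho>"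
    using right_congruence_mult[OF \<rho>, of i "Some s" j "Some t" "Some u"] by simp
qed

lemma act_kernel_zero_adjoin_Some:
  assumes S: "monoid S" and f: "\<And>i. i < n \<Longrightarrow> f i \<in> carrier S" and n: "0 < n"
    and K: "act_kernel S n f = generated_right_congruence S n H"
  shows "act_kernel (zero_adjoin S) n (Some \<circ> f) = generated_right_congruence (zero_adjoin S) n
    (map_prod (apsnd Some) (apsnd Some) ` H \<union>
     {((i, None), (0, None)) | i. i < n \<and> None \<in> carrier (zero_adjoin S)})"
    (is "_ = generated_right_congruence _ _ (?L ` H \<union> ?N)")
proof (rule generated_right_congruence_unique)
  show "right_congruence (zero_adjoin S) n (act_kernel (zero_adjoin S) n (Some \<circ> f))"
    using right_congruence_act_kernel[OF monoid_zero_adjoin[OF S]] f by simp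
  have "H \<subseteq> act_kernel S n f"
    using K generated_right_congruence_superset by blast
  then have "?L ` H \<subseteq> act_kernel (zero_adjoin S) n (Some \<circ> f)"
    by (force simp: act_kernel_def free_act_def)
  moreover have "?N \<subseteq> act_kernel (zero_adjoin S) n (Some \<circ> f)"
    using n by (auto simp: act_kernel_def free_act_def)
  ultimately show "?L ` H \<union> ?N \<subseteq> act_kernel (zero_adjoin S) n (Some \<circ> f)"
    by blast
next
  fix \<rho> assume \<rho>: "right_congruence (zero_adjoin S) n \<rho>" "?L ` H \<union> ?N \<subseteq> \<rho>"
  have "H \<subseteq> ?L -` \<rho>"
    using \<rho>(2) by blast
  then have Some_pairs: "act_kernel S n f \<subseteq> ?L -` \<rho>"
    using K generated_right_congruence_least[OF right_congruence_vimage_Some[OF \<rho>(1)]] by simp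
  have None_pairs: "((i, None), (j, None)) \<in> \<rho>"
    if "None \<in> carrier (zero_adjoin S)" "i < n" "j < n" for i j
  proof -
    have "((i, None), (0, None)) \<in> \<rho>" "((j, None), (0, None)) \<in> \<rho>"
      using \<rho>(2) that by auto
    then show ?thesis
      using right_congruence_sym[OF \<rho>(1)] right_congruence_trans[OF \<rho>(1)] by blast
  qed
  show "act_kernel (zero_adjoin S) n (Some \<circ> f) \<subseteq> \<rho>"
  proof
    fix p assume p: "p \<in> act_kernel (zero_adjoin S) n (Some \<circ> f)"
    then obtain i s j t where p_eq: "p = ((i, s), (j, t))" and ij: "i < n" "j < n"
      and st: "s \<in> carrier (zero_adjoin S)" "t \<in> carrier (zero_adjoin S)"
      and eq: "Some (f i) \<otimes>\<^bsub>zero_adjoin S\<^esub> s = Some (f j) \<otimes>\<^bsub>zero_adjoin S\<^esub> t"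
      by (auto simp: act_kernel_def free_act_def)
    show "p \<in> \<rho>"
    proof (cases s; cases t)
      fix a b assume "s = Some a" "t = Some b"
      then have "((i, a), (j, b)) \<in> act_kernel S n f"
        using ij st eq by (simp add: act_kernel_def free_act_def)
      then show ?thesis
        using Some_pairs p_eq \<open>s = Some a\<close> \<open>t = Some b\<close> by auto
    qed (use eq st p_eq ij None_pairs in auto)
  qed
qed

lemma fp_right_ideal_zero_adjoin:
  assumes S: "monoid S" and I: "I \<subseteq> carrier S" "I \<noteq> {}" "fp_right_ideal S I"
  shows "fp_right_ideal (zero_adjoin S) (Some ` I \<union> ({None} \<inter> carrier (zero_adjoin S)))"
proof -
  obtain n f H where f: "\<forall>i<n. f i \<in> I" and I_eq: "I = right_ideal_span S (f ` {..<n})"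
    and H: "finite H" "H \<subseteq> free_act S n \<times> free_act S n"
      "act_kernel S n f = generated_right_congruence S n H"
    using I(3) unfolding fp_right_ideal_def fg_right_congruence_def right_ideal_span_image by blast
  have n: "0 < n"
    using I(2) I_eq by (cases n) auto
  have "act_kernel (zero_adjoin S) n (Some \<circ> f) = generated_right_congruence (zero_adjoin S) n
      (map_prod (apsnd Some) (apsnd Some) ` H \<union>
       {((i, None), (0, None)) | i. i < n \<and> None \<in> carrier (zero_adjoin S)})"
    using act_kernel_zero_adjoin_Some[OF S _ n H(3)] f I(1) by blast
  then have "fg_right_congruence (zero_adjoin S) n (act_kernel (zero_adjoin S) n (Some \<circ> f))"
    unfolding fg_right_congruence_def
    using H(1,2) n by (intro exI conjI) (auto simp: free_act_def)
  moreover have "Some ` I \<union> ({None} \<inter> carrier (zero_adjoin S)) =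
      right_ideal_span (zero_adjoin S) ((Some \<circ> f) ` {..<n})"
  proof -
    have X': "(Some \<circ> f) ` {..<n} \<subseteq> carrier (zero_adjoin S)"
      using f I(1) by auto
    have x0: "Some (f 0) \<in> (Some \<circ> f) ` {..<n}"
      using n by simp
    have "{x. Some x \<in> (Some \<circ> f) ` {..<n}} = f ` {..<n}"
      by auto
    then show ?thesis
      unfolding right_ideal_span_zero_adjoin[OF X' x0] I_eq by simp
  qed
  moreover have "\<forall>i<n. (Some \<circ> f) i \<in> Some ` I \<union> ({None} \<inter> carrier (zero_adjoin S))"
    using f by simp
  ultimately show ?thesis
    unfolding fp_right_ideal_def right_ideal_span_image by blast
qed

lemma fp_right_ideal_zero_adjoin_span_None:
  assumes S: "monoid S" and X': "X' \<subseteq> carrier (zero_adjoin S)" "X' \<subseteq> {None}"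
  shows "fp_right_ideal (zero_adjoin S) (right_ideal_span (zero_adjoin S) X')"
proof (cases "X' = {}")
  case True
  then show ?thesis
    using fp_right_ideal_empty by simp
next
  case False
  then have X'_eq: "X' = {None}"
    using X'(2) by blast
  have "None \<otimes>\<^bsub>zero_adjoin S\<^esub> \<one>\<^bsub>zero_adjoin S\<^esub> \<in> right_ideal_span (zero_adjoin S) X'"
    using X'_eq monoid.one_closed[OF monoid_zero_adjoin[OF S]] by (intro right_ideal_span_memI) simp_all
  then have "right_ideal_span (zero_adjoin S) X' = {None}"
    using X'_eq by auto
  moreover have "None \<in> carrier (zero_adjoin S)"
    using X' X'_eq by simp
  ultimately show ?thesis
    using fp_right_ideal_left_zero[OF monoid_zero_adjoin[OF S]] by simp
qed

lemma weakly_right_coherent_zero_adjoin: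
  assumes S: "monoid S" and W: "weakly_right_coherent S"
  shows "weakly_right_coherent (zero_adjoin S)"
  unfolding weakly_right_coherent_def
proof (intro allI impI)
  fix I' assume "fg_right_ideal (zero_adjoin S) I'"
  then obtain X' where X': "finite X'" "X' \<subseteq> carrier (zero_adjoin S)"
    and I'_eq: "I' = right_ideal_span (zero_adjoin S) X'"
    unfolding fg_right_ideal_def by blast
  show "fp_right_ideal (zero_adjoin S) I'"
  proof (cases "X' \<subseteq> {None}")
    case True
    then show ?thesis
      using fp_right_ideal_zero_adjoin_span_None[OF S X'(2)] I'_eq by simp
  next
    case False
    then obtain x0 where x0: "Some x0 \<in> X'"
      by (metis insertI1 not_None_eq subsetI)
    let ?I = "right_ideal_span S {x. Some x \<in> X'}"
    have "finite {x. Some x \<in> X'}"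
      using finite_vimageI[OF X'(1) inj_Some] by (simp add: vimage_def)
    moreover have "{x. Some x \<in> X'} \<subseteq> carrier S"
      using X'(2) by auto
    ultimately have "fg_right_ideal S ?I"
      by (rule fg_right_ideal_span[OF S])
    then have "fp_right_ideal S ?I" "?I \<subseteq> carrier S"
      using W fg_right_ideal_subset_carrier unfolding weakly_right_coherent_def by blast+
    moreover have "x0 \<otimes>\<^bsub>S\<^esub> \<one>\<^bsub>S\<^esub> \<in> ?I"
      using x0 monoid.one_closed[OF S] by (intro right_ideal_span_memI) simp_all
    ultimately have "fp_right_ideal (zero_adjoin S) (Some ` ?I \<union> ({None} \<inter> carrier (zero_adjoin S)))"
      using fp_right_ideal_zero_adjoin[OF S] by blast
    then show ?thesis
      using right_ideal_span_zero_adjoin[OF X'(2) x0] I'_eq by simp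
  qed
qed

section \<open>From $S^0$ to $S$\<close>

definition zero_fibre :: "'a monoid \<Rightarrow> nat \<Rightarrow> (nat \<Rightarrow> 'a option) \<Rightarrow> (nat \<times> 'a option) set" where
  "zero_fibre S n g = {(i, s) \<in> free_act (zero_adjoin S) n. g i \<otimes>\<^bsub>zero_adjoin S\<^esub> s = None}"

definition zero_adjoin_extension ::
  "'a monoid \<Rightarrow> nat \<Rightarrow> (nat \<Rightarrow> 'a option) \<Rightarrow> ((nat \<times> 'a) \<times> (nat \<times> 'a)) set \<Rightarrow>
   ((nat \<times> 'a option) \<times> (nat \<times> 'a option)) set" where
  "zero_adjoin_extension S n g \<sigma> =
     {((i, Some a), (j, Some b)) | i a j b. g i \<noteq> None \<and> g j \<noteq> None \<and> ((i, a), (j, b)) \<in> \<sigma>}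
     \<union> zero_fibre S n g \<times> zero_fibre S n g"

lemma zero_adjoin_extension_Some:
  assumes "((i, Some a), (j, Some b)) \<in> zero_adjoin_extension S n g \<sigma>" "g i \<noteq> None"
  shows "((i, a), (j, b)) \<in> \<sigma>"
  using assms by (auto simp: zero_adjoin_extension_def zero_fibre_def mult_zero_adjoin_eq_None)

lemma zero_fibre_mult:
  assumes S: "monoid S" and g: "\<And>i. i < n \<Longrightarrow> g i \<in> carrier (zero_adjoin S)"
    and w: "(k, w) \<in> zero_fibre S n g" and u: "u \<in> carrier (zero_adjoin S)"
  shows "(k, w \<otimes>\<^bsub>zero_adjoin S\<^esub> u) \<in> zero_fibre S n g"
proof -
  have k: "k < n" "w \<in> carrier (zero_adjoin S)" "g k \<otimes>\<^bsub>zero_adjoin S\<^esub> w = None"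
    using w by (auto simp: zero_fibre_def free_act_def)
  have "g k \<otimes>\<^bsub>zero_adjoin S\<^esub> (w \<otimes>\<^bsub>zero_adjoin S\<^esub> u) =
      g k \<otimes>\<^bsub>zero_adjoin S\<^esub> w \<otimes>\<^bsub>zero_adjoin S\<^esub> u"
    using monoid.m_assoc[OF monoid_zero_adjoin[OF S] g[OF k(1)] k(2) u] by simp
  also have "\<dots> = None"
    using k(3) by simp
  finally show ?thesis
    using k(1) monoid.m_closed[OF monoid_zero_adjoin[OF S] k(2) u]
    by (simp add: zero_fibre_def free_act_def)
qed

lemma zero_adjoin_extension_mult:
  assumes S: "monoid S" and \<sigma>: "right_congruence S n \<sigma>"
    and g: "\<And>i. i < n \<Longrightarrow> g i \<in> carrier (zero_adjoin S)"
    and st: "((i, s), (j, t)) \<in> zero_adjoin_extension S n g \<sigma>"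
    and u: "u \<in> carrier (zero_adjoin S)"
  shows "((i, s \<otimes>\<^bsub>zero_adjoin S\<^esub> u), (j, t \<otimes>\<^bsub>zero_adjoin S\<^esub> u))
    \<in> zero_adjoin_extension S n g \<sigma>"
proof (cases "(i, s) \<in> zero_fibre S n g")
  case True
  then have "(j, t) \<in> zero_fibre S n g"
    using st by (auto simp: zero_adjoin_extension_def zero_fibre_def mult_zero_adjoin_eq_None)
  then show ?thesis
    using True zero_fibre_mult[where g = g and n = n, OF S g _ u]
    by (simp add: zero_adjoin_extension_def)
next
  case False
  then obtain a b where ab: "s = Some a" "t = Some b" "g i \<noteq> None" "g j \<noteq> None"
    "((i, a), (j, b)) \<in> \<sigma>"
    using st by (auto simp: zero_adjoin_extension_def)
  show ?thesis
  proof (cases u)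
    case None
    then show ?thesis
      using u right_congruence_field[OF \<sigma> ab(5)]
      by (simp add: zero_adjoin_extension_def zero_fibre_def free_act_def)
  next
    case (Some v)
    then have "((i, a \<otimes>\<^bsub>S\<^esub> v), (j, b \<otimes>\<^bsub>S\<^esub> v)) \<in> \<sigma>"
      using u right_congruence_mult[OF \<sigma> ab(5)] by simp
    then show ?thesis
      using ab Some by (simp add: zero_adjoin_extension_def)
  qed
qed

lemma trans_Un_Times_disjoint:
  assumes "trans P" and "\<And>x y. (x, y) \<in> P \<Longrightarrow> x \<notin> A \<and> y \<notin> A"
  shows "trans (P \<union> A \<times> A)"
  using assms unfolding trans_def by blast

lemma right_congruence_zero_adjoin_extension:
  assumes S: "monoid S" and \<sigma>: "right_congruence S n \<sigma>"
    and g: "\<And>i. i < n \<Longrightarrow> g i \<in> carrier (zero_adjoin S)"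
  shows "right_congruence (zero_adjoin S) n (zero_adjoin_extension S n g \<sigma>)"
proof -
  let ?F = "zero_fibre S n g"
  define P where "P = {((i, Some a), (j, Some b)) | i a j b.
    g i \<noteq> None \<and> g j \<noteq> None \<and> ((i, a), (j, b)) \<in> \<sigma>}"
  have extension_eq: "zero_adjoin_extension S n g \<sigma> = P \<union> ?F \<times> ?F"
    by (simp add: zero_adjoin_extension_def P_def)
  have "P \<union> ?F \<times> ?F \<subseteq> free_act (zero_adjoin S) n \<times> free_act (zero_adjoin S) n"
    using right_congruence_field[OF \<sigma>] by (auto simp: P_def zero_fibre_def free_act_def)
  moreover have "(x, x) \<in> P \<union> ?F \<times> ?F" if x: "x \<in> free_act (zero_adjoin S) n" for x
  proof (cases "x \<in> ?F")
    case False
    with x obtain i a where "x = (i, Some a)" "g i \<noteq> None" "(i, a) \<in> free_act S n"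
      by (cases x) (auto simp: zero_fibre_def free_act_def mult_zero_adjoin_eq_None)
    then show ?thesis
      using right_congruence_refl[OF \<sigma>] by (simp add: P_def)
  qed simp
  moreover have "sym (P \<union> ?F \<times> ?F)"
    using right_congruence_sym[OF \<sigma>] unfolding sym_def by (auto simp: P_def)
  moreover have "trans (P \<union> ?F \<times> ?F)"
  proof (rule trans_Un_Times_disjoint)
    show "trans P"
      using right_congruence_trans[OF \<sigma>] unfolding trans_def by (auto simp: P_def)
    show "x \<notin> ?F \<and> y \<notin> ?F" if "(x, y) \<in> P" for x y
      using that by (auto simp: P_def zero_fibre_def mult_zero_adjoin_eq_None)
  qed
  ultimately have "equiv (free_act (zero_adjoin S) n) (zero_adjoin_extension S n g \<sigma>)"
    unfolding equiv_def refl_on_def extension_eq by blast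
  then show ?thesis
    unfolding right_congruence_def using zero_adjoin_extension_mult[where g = g, OF S \<sigma> g] by blast
qed

definition nonzero_relations ::
  "(nat \<Rightarrow> 'a option) \<Rightarrow> ((nat \<times> 'a option) \<times> (nat \<times> 'a option)) set \<Rightarrow>
   ((nat \<times> 'a) \<times> (nat \<times> 'a)) set" where
  "nonzero_relations g H = {((i, a), (j, b)). ((i, Some a), (j, Some b)) \<in> H \<and> g i \<noteq> None \<and> g j \<noteq> None}"

lemma finite_nonzero_relations:
  assumes "finite H"
  shows "finite (nonzero_relations g H)"
proof (rule finite_subset)
  show "finite (map_prod (apsnd Some) (apsnd Some) -` H)"
    using finite_vimageI[OF assms prod.inj_map[of "apsnd Some" "apsnd Some"]] by simp
qed (auto simp: nonzero_relations_def)

lemma subset_zero_adjoin_extension: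
  assumes H': "H' \<subseteq> act_kernel (zero_adjoin S) n g" and \<sigma>: "nonzero_relations g H' \<subseteq> \<sigma>"
  shows "H' \<subseteq> zero_adjoin_extension S n g \<sigma>"
proof
  fix p assume p: "p \<in> H'"
  then obtain i s j t where p_eq: "p = ((i, s), (j, t))" and ij: "i < n" "j < n"
    and st: "s \<in> carrier (zero_adjoin S)" "t \<in> carrier (zero_adjoin S)"
    and eq: "g i \<otimes>\<^bsub>zero_adjoin S\<^esub> s = g j \<otimes>\<^bsub>zero_adjoin S\<^esub> t"
    using H' by (auto simp: act_kernel_def free_act_def)
  show "p \<in> zero_adjoin_extension S n g \<sigma>"
  proof (cases "g i \<otimes>\<^bsub>zero_adjoin S\<^esub> s = None")
    case True
    then show ?thesis
      using p_eq ij st eq by (simp add: zero_adjoin_extension_def zero_fibre_def free_act_def)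
  next
    case False
    then obtain a b where ab: "s = Some a" "t = Some b" "g i \<noteq> None" "g j \<noteq> None"
      using eq by (cases "g i"; cases s; cases "g j"; cases t) auto
    then have "((i, a), (j, b)) \<in> \<sigma>"
      using p p_eq \<sigma> by (auto simp: nonzero_relations_def)
    then show ?thesis
      using p_eq ab by (auto simp: zero_adjoin_extension_def)
  qed
qed

context
  fixes S :: "'a monoid" and n :: nat and g :: "nat \<Rightarrow> 'a option"
    and f :: "nat \<Rightarrow> 'a" and r :: "nat \<Rightarrow> nat"
  assumes S: "monoid S" and g: "\<And>i. i < n \<Longrightarrow> g i \<in> carrier (zero_adjoin S)"
    and r_less: "\<And>i. i < n \<Longrightarrow> r i < n" and g_r: "\<And>i. i < n \<Longrightarrow> g (r i) = Some (f i)"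
    and r_id: "\<And>i. i < n \<Longrightarrow> g i \<noteq> None \<Longrightarrow> r i = i"
begin

lemma redirected_generator_in_carrier: "i < n \<Longrightarrow> f i \<in> carrier S"
  using g[OF r_less] g_r by fastforce

lemma redirected_generator_eq: "i < n \<Longrightarrow> g i \<noteq> None \<Longrightarrow> g i = Some (f i)"
  using g_r r_id by fastforce

lemma redirection_relations_subset_act_kernel:
  assumes H': "H' \<subseteq> act_kernel (zero_adjoin S) n g"
  shows "nonzero_relations g H' \<union> {((i, \<one>\<^bsub>S\<^esub>), (r i, \<one>\<^bsub>S\<^esub>)) | i. i < n \<and> g i = None}
    \<subseteq> act_kernel S n f"
proof -
  have "nonzero_relations g H' \<subseteq> act_kernel S n f"
  proof
    fix p assume "p \<in> nonzero_relations g H'"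
    then obtain i a j b where p: "p = ((i, a), (j, b))" "((i, Some a), (j, Some b)) \<in> H'"
      "g i \<noteq> None" "g j \<noteq> None"
      by (auto simp: nonzero_relations_def)
    then have ij: "i < n" "j < n" and "a \<in> carrier S" "b \<in> carrier S"
      "g i \<otimes>\<^bsub>zero_adjoin S\<^esub> Some a = g j \<otimes>\<^bsub>zero_adjoin S\<^esub> Some b"
      using H' by (auto simp: act_kernel_def free_act_def)
    then show "p \<in> act_kernel S n f"
      using p redirected_generator_eq[OF ij(1) p(3)] redirected_generator_eq[OF ij(2) p(4)]
      by (simp add: act_kernel_def free_act_def)
  qed
  moreover have "f (r i) = f i" if "i < n" for i
    using redirected_generator_eq[OF r_less[OF that]] g_r[OF that] by simp
  then have "{((i, \<one>\<^bsub>S\<^esub>), (r i, \<one>\<^bsub>S\<^esub>)) | i. i < n \<and> g i = None} \<subseteq> act_kernel S n f"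
    using r_less monoid.one_closed[OF S] by (auto simp: act_kernel_def free_act_def)
  ultimately show ?thesis
    by blast
qed

lemma act_kernel_redirected_subset:
  assumes \<sigma>: "right_congruence S n \<sigma>"
    and kernel_g: "act_kernel (zero_adjoin S) n g \<subseteq> zero_adjoin_extension S n g \<sigma>"
    and redirect: "{((i, \<one>\<^bsub>S\<^esub>), (r i, \<one>\<^bsub>S\<^esub>)) | i. i < n \<and> g i = None} \<subseteq> \<sigma>"
  shows "act_kernel S n f \<subseteq> \<sigma>"
proof
  have to_r: "((i, a), (r i, a)) \<in> \<sigma>" if "i < n" "a \<in> carrier S" for i a
  proof (cases "g i = None")
    case True
    then have "((i, \<one>\<^bsub>S\<^esub>), (r i, \<one>\<^bsub>S\<^esub>)) \<in> \<sigma>"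
      using redirect that by blast
    then show ?thesis
      using right_congruence_mult[OF \<sigma> _ that(2)] monoid.l_one[OF S that(2)] by fastforce
  next
    case False
    then show ?thesis
      using right_congruence_refl[OF \<sigma>] r_id that by (simp add: free_act_def)
  qed
  fix p assume "p \<in> act_kernel S n f"
  then obtain i a j b where p_eq: "p = ((i, a), (j, b))" and ij: "i < n" "j < n"
    and ab: "a \<in> carrier S" "b \<in> carrier S" and eq: "f i \<otimes>\<^bsub>S\<^esub> a = f j \<otimes>\<^bsub>S\<^esub> b"
    by (auto simp: act_kernel_def free_act_def)
  have "((r i, Some a), (r j, Some b)) \<in> act_kernel (zero_adjoin S) n g"
    using ij ab eq r_less g_r by (simp add: act_kernel_def free_act_def)
  then have "((r i, a), (r j, b)) \<in> \<sigma>"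
    using kernel_g zero_adjoin_extension_Some[of "r i" a "r j" b S n g \<sigma>] g_r[OF ij(1)] by auto
  then show "p \<in> \<sigma>"
    using p_eq to_r[OF ij(1) ab(1)] to_r[OF ij(2) ab(2)]
      right_congruence_sym[OF \<sigma>] right_congruence_trans[OF \<sigma>]
    by meson
qed

lemma act_kernel_of_zero_adjoin:
  assumes K: "act_kernel (zero_adjoin S) n g = generated_right_congruence (zero_adjoin S) n H'"
  shows "act_kernel S n f = generated_right_congruence S n
    (nonzero_relations g H' \<union> {((i, \<one>\<^bsub>S\<^esub>), (r i, \<one>\<^bsub>S\<^esub>)) | i. i < n \<and> g i = None})"
proof (rule generated_right_congruence_unique)
  show "right_congruence S n (act_kernel S n f)"
    using right_congruence_act_kernel[OF S] redirected_generator_in_carrier by blast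
  have H'_kernel: "H' \<subseteq> act_kernel (zero_adjoin S) n g"
    using K generated_right_congruence_superset by blast
  then show "nonzero_relations g H' \<union> {((i, \<one>\<^bsub>S\<^esub>), (r i, \<one>\<^bsub>S\<^esub>)) | i. i < n \<and> g i = None}
      \<subseteq> act_kernel S n f"
    by (rule redirection_relations_subset_act_kernel)
  fix \<sigma> assume \<sigma>: "right_congruence S n \<sigma>"
    "nonzero_relations g H' \<union> {((i, \<one>\<^bsub>S\<^esub>), (r i, \<one>\<^bsub>S\<^esub>)) | i. i < n \<and> g i = None} \<subseteq> \<sigma>"
  have "H' \<subseteq> zero_adjoin_extension S n g \<sigma>"
    using subset_zero_adjoin_extension[OF H'_kernel] \<sigma>(2) by blast
  then have "act_kernel (zero_adjoin S) n g \<subseteq> zero_adjoin_extension S n g \<sigma>"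
    using K generated_right_congruence_least[OF right_congruence_zero_adjoin_extension[OF S \<sigma>(1) g]]
    by simp
  then show "act_kernel S n f \<subseteq> \<sigma>"
    using act_kernel_redirected_subset[OF \<sigma>(1)] \<sigma>(2) by blast
qed

lemma fg_right_congruence_act_kernel_of_zero_adjoin:
  assumes "fg_right_congruence (zero_adjoin S) n (act_kernel (zero_adjoin S) n g)"
  shows "fg_right_congruence S n (act_kernel S n f)"
proof -
  obtain H' where H': "finite H'" "H' \<subseteq> free_act (zero_adjoin S) n \<times> free_act (zero_adjoin S) n"
    "act_kernel (zero_adjoin S) n g = generated_right_congruence (zero_adjoin S) n H'"
    using assms unfolding fg_right_congruence_def by blast
  let ?R = "nonzero_relations g H' \<union> {((i, \<one>\<^bsub>S\<^esub>), (r i, \<one>\<^bsub>S\<^esub>)) | i. i < n \<and> g i = None}"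
  have "finite ?R"
    using finite_nonzero_relations[OF H'(1)] by simp
  moreover have "?R \<subseteq> free_act S n \<times> free_act S n"
    using H'(2) r_less monoid.one_closed[OF S] by (auto simp: nonzero_relations_def free_act_def)
  ultimately show ?thesis
    unfolding fg_right_congruence_def using act_kernel_of_zero_adjoin[OF H'(3)] by blast
qed

end

lemma fp_right_ideal_Some_vimage:
  assumes S: "monoid S" and I': "I' \<subseteq> carrier (zero_adjoin S)" "fp_right_ideal (zero_adjoin S) I'"
    and x0: "Some x0 \<in> I'"
  shows "fp_right_ideal S {x. Some x \<in> I'}"
proof -
  obtain n g where g: "\<forall>i<n. g i \<in> I'"
    and I'_eq: "I' = {g i \<otimes>\<^bsub>zero_adjoin S\<^esub> s | i s. i < n \<and> s \<in> carrier (zero_adjoin S)}"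
    and fg: "fg_right_congruence (zero_adjoin S) n (act_kernel (zero_adjoin S) n g)"
    using I'(2) unfolding fp_right_ideal_def by blast
  have g_carrier: "g i \<in> carrier (zero_adjoin S)" if "i < n" for i
    using g I'(1) that by blast
  obtain i0 s0 where i0: "i0 < n" "Some x0 = g i0 \<otimes>\<^bsub>zero_adjoin S\<^esub> s0"
    using x0 I'_eq by blast
  then obtain a0 where a0: "g i0 = Some a0"
    by (cases "g i0") auto
  define f where "f i = (case g i of Some a \<Rightarrow> a | None \<Rightarrow> a0)" for i
  define r where "r i = (if g i = None then i0 else i)" for i
  have r: "r i < n" "g (r i) = Some (f i)" "g i \<noteq> None \<Longrightarrow> r i = i" if "i < n" for i
    using that i0(1) a0 by (cases "g i"; simp add: f_def r_def)+
  have vimage_g: "{x. Some x \<in> g ` {..<n}} = f ` {..<n}"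
  proof (intro Set.set_eqI iffI)
    fix x assume "x \<in> {x. Some x \<in> g ` {..<n}}"
    then obtain i where "i < n" "g i = Some x"
      by auto
    then show "x \<in> f ` {..<n}"
      by (metis f_def image_eqI lessThan_iff option.simps(5))
  next
    fix x assume "x \<in> f ` {..<n}"
    then obtain i where "i < n" "x = f i"
      by blast
    then have "Some x = g (r i)" "r i \<in> {..<n}"
      using r(1,2) by simp_all
    then show "x \<in> {x. Some x \<in> g ` {..<n}}"
      by blast
  qed
  have "g ` {..<n} \<subseteq> carrier (zero_adjoin S)"
    using g_carrier by blast
  moreover have "Some a0 \<in> g ` {..<n}"
    using i0(1) a0 by (metis image_eqI lessThan_iff)
  ultimately have "I' = Some ` right_ideal_span S (f ` {..<n}) \<union> ({None} \<inter> carrier (zero_adjoin S))"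
    unfolding I'_eq right_ideal_span_image by (simp only: right_ideal_span_zero_adjoin vimage_g)
  then have "{x. Some x \<in> I'} = right_ideal_span S (f ` {..<n})"
    by auto
  moreover have "\<forall>i<n. f i \<in> {x. Some x \<in> I'}"
    using g r by (metis mem_Collect_eq)
  moreover have "fg_right_congruence S n (act_kernel S n f)"
    using fg_right_congruence_act_kernel_of_zero_adjoin[OF S g_carrier r fg] by blast
  ultimately show ?thesis
    unfolding fp_right_ideal_def right_ideal_span_image by blast
qed

lemma weakly_right_coherent_of_zero_adjoin:
  assumes S: "monoid S" and W: "weakly_right_coherent (zero_adjoin S)"
  shows "weakly_right_coherent S"
  unfolding weakly_right_coherent_def
proof (intro allI impI)
  fix I assume "fg_right_ideal S I"
  then obtain X where X: "finite X" "X \<subseteq> carrier S" and I_eq: "I = right_ideal_span S X"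
    unfolding fg_right_ideal_def by blast
  show "fp_right_ideal S I"
  proof (cases "X = {}")
    case True
    then show ?thesis
      using I_eq fp_right_ideal_empty by simp
  next
    case False
    then obtain x0 where x0: "x0 \<in> X"
      by blast
    let ?I' = "right_ideal_span (zero_adjoin S) (Some ` X)"
    have X': "Some ` X \<subseteq> carrier (zero_adjoin S)"
      using X(2) by auto
    have "fg_right_ideal (zero_adjoin S) ?I'"
      by (rule fg_right_ideal_span[OF monoid_zero_adjoin[OF S] finite_imageI[OF X(1)] X'])
    then have "?I' \<subseteq> carrier (zero_adjoin S)" "fp_right_ideal (zero_adjoin S) ?I'"
      using W fg_right_ideal_subset_carrier unfolding weakly_right_coherent_def by blast+
    moreover have "Some x0 \<in> ?I'"
    proof -
      have "Some x0 \<otimes>\<^bsub>zero_adjoin S\<^esub> Some \<one>\<^bsub>S\<^esub> \<in> ?I'"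
        using x0 monoid.one_closed[OF S] by (intro right_ideal_span_memI) simp_all
      moreover have "x0 \<otimes>\<^bsub>S\<^esub> \<one>\<^bsub>S\<^esub> = x0"
        using x0 X(2) monoid.r_one[OF S] by blast
      ultimately show ?thesis
        by simp
    qed
    ultimately have "fp_right_ideal S {x. Some x \<in> ?I'}"
      by (rule fp_right_ideal_Some_vimage[OF S])
    moreover have "{x. Some x \<in> ?I'} = I"
      unfolding right_ideal_span_zero_adjoin[OF X' imageI[OF x0]] I_eq by auto
    ultimately show ?thesis
      by simp
  qed
qed

theorem mainTheorem5:
  fixes S :: "'a monoid"
  assumes "monoid S"
  shows "weakly_right_coherent S \<longleftrightarrow> weakly_right_coherent (zero_adjoin S)"
  using weakly_right_coherent_zero_adjoin[OF assms] weakly_right_coherent_of_zero_adjoin[OF assms]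
  by blast

end
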